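(* For all positive integers $m,n$, the diameter of the cyclic simplicial rook graph satisfies $\operatorname{diam}(\mathcal{CSR}(m,n))=m-\left\lfloor \frac{m-1}{n}\right\rfloor-1$.
   Context: For positive integers $m,n$, the cyclic simplicial rook graph $\mathcal{CSR}(m,n)$ is the graph whose vertices are the vectors $(a_1,\dots,a_m)\in\mathbb{Z}_n^m$ with $a_1+\cdots+a_m\equiv 0 \pmod n$, two vertices being adjacent if and only if their vectors differ in exactly two coordinates. *)

theory Defs
  imports Main "HOL-Library.Extended_Nat"
begin

text \<open>Vertices of CSR(m,n): vectors (a_1,...,a_m) in Z_n^m (entries represented by
  residues 0..n-1, as lists of length m) whose coordinate sum is 0 mod n.\<close>
definition csr_vertices :: "nat \<Rightarrow> nat \<Rightarrow> nat list set" where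
  "csr_vertices m n = {xs. length xs = m \<and> (\<forall>x\<in>set xs. x < n) \<and> sum_list xs mod n = 0}"

definition csr_adj :: "nat \<Rightarrow> nat \<Rightarrow> nat list \<Rightarrow> nat list \<Rightarrow> bool" where
  "csr_adj m n xs ys \<longleftrightarrow> xs \<in> csr_vertices m n \<and> ys \<in> csr_vertices m n \<and>
     card {i. i < m \<and> xs ! i \<noteq> ys ! i} = 2"

definition graph_dist :: "('a \<Rightarrow> 'a \<Rightarrow> bool) \<Rightarrow> 'a \<Rightarrow> 'a \<Rightarrow> enat" where
  "graph_dist E u v = (INF k \<in> {k. (E ^^ k) u v}. enat k)"

definition graph_diam :: "'a set \<Rightarrow> ('a \<Rightarrow> 'a \<Rightarrow> bool) \<Rightarrow> enat" where
  "graph_diam V E = (SUP u \<in> V. SUP v \<in> V. graph_dist E u v)"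

end

theory Submission
  imports Defs "HOL-Number_Theory.Cong"
begin

(* Let s be the number of coordinates in which two vertices u and v differ.
   Upper bound: distinct vertices differ in at least two coordinates, and one move can copy a
   coordinate of v into u while repairing the sum at another differing coordinate, so s - 1 moves
   suffice.  Better, among any n differing coordinates the prefix-sum pigeonhole argument yields a
   nonempty block of at most n coordinates on which u and v have equal sums mod n; such a block of
   size b is fixed in b - 1 moves without touching the rest.  Peeling off blocks gives distance at
   most s - ceil(s/n) <= m - ceil(m/n).
   Lower bound: along a walk of length k from the zero vertex one maintains a set T of coordinates
   containing the support, coloured so that every colour class sums to 0 mod n, with
   |T| - #colours <= k: a move changes two coordinates, and merging all classes they meet raises
   |T| - #colours by at most one.  For x = (1, ..., 1, -(m - 1)) every class avoiding the last
   coordinate has size a positive multiple of n, which forces k >= m - 1 - floor((m - 1)/n). *)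

lemma graph_dist_le_if_walk: "(E ^^ k) u v \<Longrightarrow> graph_dist E u v \<le> enat k"
  by (auto simp: graph_dist_def intro: INF_lower)

lemma le_graph_dist_if_walks_long:
  "(\<And>k. (E ^^ k) u v \<Longrightarrow> d \<le> k) \<Longrightarrow> enat d \<le> graph_dist E u v"
  by (auto simp: graph_dist_def intro!: INF_greatest)

lemma graph_diam_le:
  "(\<And>u v. u \<in> V \<Longrightarrow> v \<in> V \<Longrightarrow> graph_dist E u v \<le> d) \<Longrightarrow> graph_diam V E \<le> d"
  by (auto simp: graph_diam_def intro!: SUP_least)

lemma graph_dist_le_diam: "u \<in> V \<Longrightarrow> v \<in> V \<Longrightarrow> graph_dist E u v \<le> graph_diam V E"
  unfolding graph_diam_def by (meson SUP_upper order_trans)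

definition diff_coords :: "nat \<Rightarrow> 'a list \<Rightarrow> 'a list \<Rightarrow> nat set" where
  "diff_coords m xs ys = {i. i < m \<and> xs ! i \<noteq> ys ! i}"

lemma finite_diff_coords [simp]: "finite (diff_coords m xs ys)"
  by (simp add: diff_coords_def)

lemma diff_coords_subset: "diff_coords m xs ys \<subseteq> {..<m}"
  by (auto simp: diff_coords_def)

lemma csr_adj_iff:
  "csr_adj m n xs ys \<longleftrightarrow>
     xs \<in> csr_vertices m n \<and> ys \<in> csr_vertices m n \<and> card (diff_coords m xs ys) = 2"
  by (simp add: csr_adj_def diff_coords_def)

lemma csr_vertices_iff:
  "xs \<in> csr_vertices m n \<longleftrightarrow> length xs = m \<and> (\<forall>i<m. xs ! i < n) \<and> n dvd (\<Sum>i<m. xs ! i)"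
  by (auto simp: csr_vertices_def all_set_conv_all_nth sum_list_sum_nth atLeast0LessThan
      mod_eq_0_iff_dvd)

lemma sum_cong_mod_iff_on_subset:
  fixes f g :: "'a \<Rightarrow> nat"
  assumes "finite A" "S \<subseteq> A" "\<And>t. t \<in> A - S \<Longrightarrow> f t = g t"
  shows "[sum f A = sum g A] (mod n) \<longleftrightarrow> [sum f S = sum g S] (mod n)"
proof -
  have "sum f A = sum f S + sum f (A - S)" "sum g A = sum g S + sum g (A - S)"
    using assms(1,2) by (metis add.commute sum.subset_diff)+
  moreover have "sum f (A - S) = sum g (A - S)"
    using assms(3) by (rule sum.cong[OF refl])
  ultimately show ?thesis by (simp add: cong_add_rcancel_nat)
qed

lemma csr_vertex_if_cong_on:
  assumes u: "u \<in> csr_vertices m n" and w: "length w = m" "\<forall>t<m. w ! t < n"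
    and S: "S \<subseteq> {..<m}" "\<And>t. t < m \<Longrightarrow> t \<notin> S \<Longrightarrow> w ! t = u ! t"
    and cong: "[(\<Sum>t\<in>S. w ! t) = (\<Sum>t\<in>S. u ! t)] (mod n)"
  shows "w \<in> csr_vertices m n"
proof -
  have "[(\<Sum>t<m. w ! t) = (\<Sum>t<m. u ! t)] (mod n)"
    using sum_cong_mod_iff_on_subset[of "{..<m}" S] S cong by simp
  then show ?thesis
    using u w by (simp add: csr_vertices_iff cong_dvd_iff)
qed

lemma csr_vertices_eq_if_diff_coords_subset_singleton:
  assumes u: "u \<in> csr_vertices m n" and v: "v \<in> csr_vertices m n"
    and D: "diff_coords m u v \<subseteq> {i}"
  shows "u = v"
proof (rule ccontr)
  assume "u \<noteq> v"
  moreover have "length u = m" "length v = m" using u v by (auto simp: csr_vertices_iff)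
  ultimately obtain t where t: "t < m" "u ! t \<noteq> v ! t" by (metis nth_equalityI)
  then have "t = i" using D by (auto simp: diff_coords_def)
  have "[(\<Sum>s<m. u ! s) = (\<Sum>s<m. v ! s)] (mod n)"
    using u v by (simp add: csr_vertices_iff cong_def mod_eq_0_iff_dvd)
  then have "[u ! t = v ! t] (mod n)"
    using sum_cong_mod_iff_on_subset[of "{..<m}" "{t}" "\<lambda>s. u ! s" "\<lambda>s. v ! s"] D t \<open>t = i\<close>
    by (auto simp: diff_coords_def)
  moreover have "u ! t < n" "v ! t < n" using u v t by (auto simp: csr_vertices_iff)
  ultimately show False using t by (simp add: cong_def)
qed

lemma csr_card_diff_coords_ge_2:
  assumes "u \<in> csr_vertices m n" "v \<in> csr_vertices m n" "u \<noteq> v"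
  shows "2 \<le> card (diff_coords m u v)"
proof (rule ccontr)
  assume "\<not> 2 \<le> card (diff_coords m u v)"
  then have "\<forall>a\<in>diff_coords m u v. \<forall>b\<in>diff_coords m u v. a = b"
    by (simp add: card_le_Suc0_iff_eq[symmetric])
  then obtain i where "diff_coords m u v \<subseteq> {i}" by blast
  then show False
    using assms csr_vertices_eq_if_diff_coords_subset_singleton by blast
qed

section \<open>Upper bound\<close>

lemma csr_adj_step_towards:
  assumes n: "0 < n" and u: "u \<in> csr_vertices m n" and v: "v \<in> csr_vertices m n"
    and ij: "i \<in> diff_coords m u v" "j \<in> diff_coords m u v" "i \<noteq> j"
  obtains w where "csr_adj m n u w" "diff_coords m w v \<subseteq> diff_coords m u v - {i}"
proof -
  have i: "i < m" "u ! i \<noteq> v ! i" and j: "j < m" "u ! j \<noteq> v ! j"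
    using ij by (auto simp: diff_coords_def)
  have len: "length u = m" and lt_n: "\<And>t. t < m \<Longrightarrow> u ! t < n" "\<And>t. t < m \<Longrightarrow> v ! t < n"
    using u v by (auto simp: csr_vertices_iff)
  \<comment> \<open>copy coordinate i from v and repair the coordinate sum at j\<close>
  define w where "w = u[i := v ! i, j := (u ! j + u ! i + (n - v ! i)) mod n]"
  have wi: "w ! i = v ! i" and wj: "w ! j = (u ! j + u ! i + (n - v ! i)) mod n"
    and w_other: "\<And>t. t \<noteq> i \<Longrightarrow> t \<noteq> j \<Longrightarrow> w ! t = u ! t"
    using ij(3) i j len by (simp_all add: w_def)
  have "[(\<Sum>t\<in>{i, j}. w ! t) = (\<Sum>t\<in>{i, j}. u ! t)] (mod n)"
  proof -
    have "[(\<Sum>t\<in>{i, j}. w ! t) = v ! i + (u ! j + u ! i + (n - v ! i))] (mod n)"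
      using ij(3) wi wj by (simp add: cong_def mod_add_right_eq)
    also have "v ! i + (u ! j + u ! i + (n - v ! i)) = (\<Sum>t\<in>{i, j}. u ! t) + n"
      using ij(3) lt_n(2)[OF i(1)] by simp
    finally show ?thesis by (simp add: cong_def)
  qed
  then have w_vertex: "w \<in> csr_vertices m n"
    using csr_vertex_if_cong_on[OF u, of w "{i, j}"] lt_n n i j len wi wj w_other
    by (auto simp: w_def nth_list_update)
  have "w ! j \<noteq> u ! j"
  proof
    assume "w ! j = u ! j"
    then have "diff_coords m u w \<subseteq> {i}"
      by (auto simp: diff_coords_def) (metis w_other)
    then have "u = w" by (rule csr_vertices_eq_if_diff_coords_subset_singleton[OF u w_vertex])
    then show False using wi i(2) by simp
  qed
  then have "diff_coords m u w = {i, j}"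
    using wi i j by (auto simp: diff_coords_def) (metis w_other)
  then have "csr_adj m n u w" using u w_vertex ij(3) by (simp add: csr_adj_iff)
  moreover have "diff_coords m w v \<subseteq> diff_coords m u v - {i}"
    using wi j by (auto simp: diff_coords_def) (metis w_other)
  ultimately show thesis by (rule that)
qed

lemma csr_walk_le_card_diff_coords:
  assumes n: "0 < n" and u: "u \<in> csr_vertices m n" and v: "v \<in> csr_vertices m n"
  shows "\<exists>k \<le> card (diff_coords m u v) - 1. (csr_adj m n ^^ k) u v"
  using u
proof (induction "card (diff_coords m u v)" arbitrary: u rule: less_induct)
  case less
  show ?case
  proof (cases "u = v")
    case True
    then show ?thesis by (intro exI[of _ 0]) simp
  next
    case False
    have two: "2 \<le> card (diff_coords m u v)"
      using csr_card_diff_coords_ge_2[OF less.prems v False] .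
    then obtain i j where ij: "i \<in> diff_coords m u v" "j \<in> diff_coords m u v" "i \<noteq> j"
      by (metis card_le_Suc0_iff_eq finite_diff_coords not_less_eq_eq numeral_2_eq_2)
    obtain w where w: "csr_adj m n u w" "diff_coords m w v \<subseteq> diff_coords m u v - {i}"
      using csr_adj_step_towards[OF n less.prems v ij] .
    have "card (diff_coords m w v) \<le> card (diff_coords m u v - {i})"
      using w(2) by (intro card_mono) auto
    also have "\<dots> = card (diff_coords m u v) - 1" using ij(1) by simp
    finally have smaller: "card (diff_coords m w v) \<le> card (diff_coords m u v) - 1" .
    have "w \<in> csr_vertices m n" using w(1) by (simp add: csr_adj_iff)
    moreover have "card (diff_coords m w v) < card (diff_coords m u v)"
      using smaller two by linarith
    ultimately obtain k where k: "k \<le> card (diff_coords m w v) - 1" "(csr_adj m n ^^ k) w v"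
      using less.hyps by blast
    have "(csr_adj m n ^^ Suc k) u v" using relpowp_Suc_I2[OF w(1) k(2)] .
    moreover have "Suc k \<le> card (diff_coords m u v) - 1" using k(1) smaller two by linarith
    ultimately show ?thesis by blast
  qed
qed

lemma exists_dvd_sum_consecutive:
  fixes g :: "nat \<Rightarrow> int"
  assumes "0 < n"
  shows "\<exists>t1 t2. t1 < t2 \<and> t2 \<le> n \<and> int n dvd (\<Sum>l = t1..<t2. g l)"
proof -
  define P where "P t = (\<Sum>l<t. g l) mod int n" for t
  have "P ` {..n} \<subseteq> {0..<int n}" using assms by (auto simp: P_def)
  then have "card (P ` {..n}) \<le> n" using card_mono[of "{0..<int n}"] by simp
  then have "\<not> inj_on P {..n}" by (intro pigeonhole) simp
  then obtain a b where "a \<le> n" "b \<le> n" "a \<noteq> b" "P a = P b"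
    by (auto simp: inj_on_def)
  then obtain t1 t2 where t: "t1 < t2" "t2 \<le> n" "P t1 = P t2"
    by (metis nat_neq_iff)
  have "(\<Sum>l<t2. g l) = (\<Sum>l<t1. g l) + (\<Sum>l = t1..<t2. g l)"
    using t(1) by (simp add: lessThan_atLeast0 sum.atLeastLessThan_concat)
  then have "int n dvd (\<Sum>l = t1..<t2. g l)"
    using t(3) by (simp add: P_def mod_eq_dvd_iff)
  then show ?thesis using t(1,2) by blast
qed

lemma exists_zero_sum_subset:
  fixes g :: "'a \<Rightarrow> int"
  assumes "0 < n" "finite D" "n \<le> card D"
  shows "\<exists>B \<subseteq> D. B \<noteq> {} \<and> card B \<le> n \<and> int n dvd (\<Sum>t\<in>B. g t)"
proof -
  obtain D0 where D0: "D0 \<subseteq> D" "card D0 = n"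
    using obtain_subset_with_card_n[OF assms(3)] by blast
  then have "finite D0" using assms(2) finite_subset by blast
  then obtain h where h: "bij_betw h {0..<n} D0"
    using ex_bij_betw_nat_finite D0(2) by blast
  obtain t1 t2 where t: "t1 < t2" "t2 \<le> n" "int n dvd (\<Sum>l = t1..<t2. g (h l))"
    using exists_dvd_sum_consecutive[OF assms(1)] by blast
  have inj: "inj_on h {t1..<t2}"
    using h t(2) by (auto simp: bij_betw_def intro: inj_on_subset)
  have "h ` {t1..<t2} \<subseteq> D"
    using h t(2) D0(1) by (auto simp: bij_betw_def)
  moreover have "card (h ` {t1..<t2}) = t2 - t1" using card_image[OF inj] by simp
  moreover have "(\<Sum>t\<in>h ` {t1..<t2}. g t) = (\<Sum>l = t1..<t2. g (h l))"
    by (rule sum.reindex[OF inj, unfolded comp_def])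
  ultimately show ?thesis using t by (intro exI[of _ "h ` {t1..<t2}"]) auto
qed

text \<open>For \<open>s \<ge> 1\<close> this is \<open>s - \<lceil>s / n\<rceil>\<close>.\<close>
definition csr_bound :: "nat \<Rightarrow> nat \<Rightarrow> nat" where
  "csr_bound n s = s - (s - 1) div n - 1"

lemma csr_bound_mono:
  assumes "0 < n"
  shows "mono (csr_bound n)"
proof (rule mono_iff_le_Suc[THEN iffD2], intro allI)
  fix s
  define q r where "q = (s - 1) div n" and "r = s div n"
  have "r \<le> ((s - 1) + n) div n" unfolding r_def using assms by (intro div_le_mono) linarith
  also have "\<dots> = q + 1" unfolding q_def using assms by (intro div_add_self2) simp
  finally have "r \<le> q + 1" .
  moreover have "q \<le> s - 1" "r \<le> s" unfolding q_def r_def by (rule div_le_dividend)+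
  ultimately show "csr_bound n s \<le> csr_bound n (Suc s)"
    unfolding csr_bound_def diff_Suc_1 q_def[symmetric] r_def[symmetric] by linarith
qed

lemma csr_bound_split:
  assumes "0 < n" "1 \<le> b" "b \<le> n" "b < s"
  shows "(b - 1) + csr_bound n (s - b) \<le> csr_bound n s"
proof -
  define q r where "q = (s - b - 1) div n" and "r = (s - 1) div n"
  have "r \<le> ((s - b - 1) + n) div n" unfolding r_def using assms by (intro div_le_mono) linarith
  also have "\<dots> = q + 1" unfolding q_def using assms(1) by (intro div_add_self2) simp
  finally have "r \<le> q + 1" .
  moreover have "q \<le> s - b - 1" "r \<le> s - 1" unfolding q_def r_def by (rule div_le_dividend)+
  ultimately show ?thesis
    unfolding csr_bound_def q_def[symmetric] r_def[symmetric] using assms(2,4) by linarith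
qed

lemma csr_walk_le_csr_bound:
  assumes n: "0 < n" and u: "u \<in> csr_vertices m n" and v: "v \<in> csr_vertices m n"
  shows "\<exists>k \<le> csr_bound n (card (diff_coords m u v)). (csr_adj m n ^^ k) u v"
  using u
proof (induction "card (diff_coords m u v)" arbitrary: u rule: less_induct)
  case less
  define D where "D = diff_coords m u v"
  show ?case
  proof (cases "card D \<le> n")
    case True
    then have "csr_bound n (card D) = card D - 1" using n by (simp add: csr_bound_def)
    then show ?thesis using csr_walk_le_card_diff_coords[OF n less.prems v] by (simp add: D_def)
  next
    case False
    obtain B where B: "B \<subseteq> D" "B \<noteq> {}" "card B \<le> n"
        "int n dvd (\<Sum>t\<in>B. int (v ! t) - int (u ! t))"
      using exists_zero_sum_subset[OF n, of D] False by (auto simp: D_def)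
    have B_cong: "[(\<Sum>t\<in>B. v ! t) = (\<Sum>t\<in>B. u ! t)] (mod n)"
      using B(4) by (simp add: cong_int_iff[symmetric] cong_iff_dvd_diff sum_subtractf)
    have B_coords: "B \<subseteq> {..<m}"
      using B(1) diff_coords_subset unfolding D_def by (rule subset_trans)
    \<comment> \<open>first fix the coordinates in the zero-sum block B, then recurse on the rest\<close>
    define w where "w = map (\<lambda>t. if t \<in> B then v ! t else u ! t) [0..<m]"
    have w_nth: "\<And>t. t < m \<Longrightarrow> w ! t = (if t \<in> B then v ! t else u ! t)"
      by (simp add: w_def)
    have w_vertex: "w \<in> csr_vertices m n"
    proof (rule csr_vertex_if_cong_on[OF less.prems _ _ B_coords])
      show "length w = m" by (simp add: w_def)
      show "\<forall>t<m. w ! t < n" using w_nth less.prems v by (simp add: csr_vertices_iff)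
      show "\<And>t. t < m \<Longrightarrow> t \<notin> B \<Longrightarrow> w ! t = u ! t" using w_nth by simp
      have "(\<Sum>t\<in>B. w ! t) = (\<Sum>t\<in>B. v ! t)" using w_nth B_coords by (intro sum.cong) auto
      then show "[(\<Sum>t\<in>B. w ! t) = (\<Sum>t\<in>B. u ! t)] (mod n)" using B_cong by simp
    qed
    have "diff_coords m u w = B"
      using w_nth B(1) by (auto simp: D_def diff_coords_def split: if_splits)
    then obtain k1 where k1: "k1 \<le> card B - 1" "(csr_adj m n ^^ k1) u w"
      using csr_walk_le_card_diff_coords[OF n less.prems w_vertex] by auto
    have "diff_coords m w v = D - B"
      using w_nth B(1) by (auto simp: D_def diff_coords_def split: if_splits)
    moreover have "finite B" using B(1) by (simp add: D_def finite_subset)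
    ultimately have "card (diff_coords m w v) = card D - card B"
      using B(1) by (simp add: card_Diff_subset)
    moreover have "card B \<ge> 1" using B(2) \<open>finite B\<close> by (simp add: Suc_le_eq card_gt_0_iff)
    ultimately obtain k2 where k2: "k2 \<le> csr_bound n (card D - card B)" "(csr_adj m n ^^ k2) w v"
      using less.hyps[OF _ w_vertex] False by (fastforce simp: D_def)
    have "(csr_adj m n ^^ (k1 + k2)) u v" using relpowp_trans[OF k1(2) k2(2)] .
    moreover have "k1 + k2 \<le> csr_bound n (card D)"
      using csr_bound_split[OF n \<open>card B \<ge> 1\<close> B(3), of "card D"] B(3) False k1(1) k2(1)
      by linarith
    ultimately show ?thesis by (auto simp: D_def)
  qed
qed

section \<open>Zero-sum colourings and the lower bound\<close>

lemma dvd_fibre_sum_if_dvd_other_fibres: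
  fixes f :: "'a \<Rightarrow> 'b::comm_semiring_1_cancel"
  assumes "finite T" "a dvd sum f T"
    and others: "\<And>col. col \<noteq> col0 \<Longrightarrow> a dvd sum f {t \<in> T. c t = col}"
  shows "a dvd sum f {t \<in> T. c t = col0}"
proof -
  let ?R = "{t \<in> T. c t \<noteq> col0}"
  have "sum f T = sum f {t \<in> T. c t = col0} + sum f ?R"
    using assms(1) by (subst sum.union_disjoint[symmetric]) (auto intro: sum.cong)
  moreover have "sum f ?R = (\<Sum>col \<in> c ` ?R. sum f {t \<in> ?R. c t = col})"
    using assms(1) by (intro sum.image_gen) simp
  moreover have "a dvd (\<Sum>col \<in> c ` ?R. sum f {t \<in> ?R. c t = col})"
  proof (rule dvd_sum)
    fix col assume "col \<in> c ` ?R"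
    then have "col \<noteq> col0" "{t \<in> ?R. c t = col} = {t \<in> T. c t = col}" by auto
    then show "a dvd sum f {t \<in> ?R. c t = col}" using others by simp
  qed
  ultimately show ?thesis using assms(2) by (simp add: dvd_add_left_iff)
qed

lemma mult_card_le_card_fibres:
  assumes "finite T" and large: "\<And>col. col \<in> K \<Longrightarrow> n \<le> card {t \<in> T. c t = col}"
  shows "n * card K \<le> card {t \<in> T. c t \<in> K}"
proof (cases "finite K")
  case True
  have "n * card K \<le> (\<Sum>col\<in>K. card {t \<in> T. c t = col})"
    using sum_bounded_below[of K n, OF large] by (simp add: mult.commute)
  also have "\<dots> = (\<Sum>col\<in>K. card {t \<in> {t \<in> T. c t \<in> K}. c t = col})"
    by (intro sum.cong refl arg_cong[where f = card]) auto
  also have "\<dots> = card {t \<in> T. c t \<in> K}"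
    unfolding card_eq_sum using assms(1) True by (intro sum.group) auto
  finally show ?thesis .
qed simp

definition merge_colours :: "'a set \<Rightarrow> 'a set \<Rightarrow> ('a \<Rightarrow> 'b) \<Rightarrow> 'b \<Rightarrow> 'a \<Rightarrow> 'b" where
  "merge_colours T J c col0 t = (if t \<in> J \<or> c t \<in> c ` (J \<inter> T) then col0 else c t)"

lemma image_merge_colours:
  assumes "J \<noteq> {}"
  shows "merge_colours T J c col0 ` (T \<union> J) = insert col0 (c ` T - c ` (J \<inter> T))"
proof
  show "merge_colours T J c col0 ` (T \<union> J) \<subseteq> insert col0 (c ` T - c ` (J \<inter> T))"
    by (auto simp: merge_colours_def)
  show "insert col0 (c ` T - c ` (J \<inter> T)) \<subseteq> merge_colours T J c col0 ` (T \<union> J)"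
  proof
    fix col assume "col \<in> insert col0 (c ` T - c ` (J \<inter> T))"
    then consider "col = col0" | t where "t \<in> T" "t \<notin> J" "c t = col" "col \<notin> c ` (J \<inter> T)"
      by blast
    then show "col \<in> merge_colours T J c col0 ` (T \<union> J)"
    proof cases
      case 1
      obtain j where "j \<in> J" using assms by blast
      then show ?thesis using 1 by (force simp: merge_colours_def)
    next
      case 2
      then show ?thesis by (force simp: merge_colours_def)
    qed
  qed
qed

lemma card_merge_colours:
  assumes "finite T" "finite J" "J \<noteq> {}" "col0 \<notin> c ` T"
  shows "card (T \<union> J) + card (c ` T) + 1
           \<le> card T + card J + card (merge_colours T J c col0 ` (T \<union> J))"
proof -
  let ?I = "J \<inter> T"
  have "card (merge_colours T J c col0 ` (T \<union> J)) = Suc (card (c ` T) - card (c ` ?I))"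
    using assms by (simp add: image_merge_colours card_Diff_subset image_mono)
  moreover have "card (T \<union> J) + card ?I = card T + card J"
    using assms(1,2) card_Un_Int[of T J] by (simp add: Int_commute)
  moreover have "card (c ` ?I) \<le> card ?I" "card (c ` ?I) \<le> card (c ` T)"
    using assms(1) by (auto intro: card_image_le card_mono)
  ultimately show ?thesis by linarith
qed

lemma fibre_merge_colours:
  assumes "col \<noteq> col0"
  shows "{t \<in> T \<union> J. merge_colours T J c col0 t = col} = {}
    \<or> {t \<in> T \<union> J. merge_colours T J c col0 t = col} = {t \<in> T. c t = col}
      \<and> {t \<in> T. c t = col} \<inter> J = {}"
proof (cases "col \<in> c ` (J \<inter> T)")
  case True
  then show ?thesis using assms by (auto simp: merge_colours_def)
next
  case False
  then have "{t \<in> T. c t = col} \<inter> J = {}" by blast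
  moreover have "{t \<in> T \<union> J. merge_colours T J c col0 t = col} = {t \<in> T. c t = col}"
    using False assms by (auto simp: merge_colours_def)
  ultimately show ?thesis by blast
qed

definition zero_sum_colourable :: "nat \<Rightarrow> nat \<Rightarrow> nat \<Rightarrow> nat list \<Rightarrow> bool" where
  "zero_sum_colourable m n k x \<longleftrightarrow> (\<exists>T (c :: nat \<Rightarrow> nat).
     T \<subseteq> {..<m} \<and> {t. t < m \<and> x ! t \<noteq> 0} \<subseteq> T \<and>
     (\<forall>col. n dvd (\<Sum>t \<in> {t \<in> T. c t = col}. x ! t)) \<and> card T \<le> k + card (c ` T))"

lemma zero_sum_colourable_step:
  assumes y: "zero_sum_colourable m n k y" and adj: "csr_adj m n y x"
  shows "zero_sum_colourable m n (Suc k) x"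
proof -
  obtain T and c :: "nat \<Rightarrow> nat" where T: "T \<subseteq> {..<m}" "{t. t < m \<and> y ! t \<noteq> 0} \<subseteq> T"
      "\<And>col. n dvd (\<Sum>t \<in> {t \<in> T. c t = col}. y ! t)" "card T \<le> k + card (c ` T)"
    using y unfolding zero_sum_colourable_def by blast
  define J where "J = diff_coords m y x"
  have x: "x \<in> csr_vertices m n" and "card J = 2" using adj by (simp_all add: csr_adj_iff J_def)
  then have J: "finite J" "J \<noteq> {}" "J \<subseteq> {..<m}" using diff_coords_subset by (auto simp: J_def)
  have agree: "\<And>t. t < m \<Longrightarrow> t \<notin> J \<Longrightarrow> x ! t = y ! t" by (auto simp: J_def diff_coords_def)
  have "finite T" using T(1) finite_subset by blast
  then obtain col0 where col0: "col0 \<notin> c ` T" using ex_new_if_finite[OF infinite_UNIV_nat] by blast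
  define T' c' where "T' = T \<union> J" and "c' = merge_colours T J c col0"
  have T': "T' \<subseteq> {..<m}" "finite T'" using T(1) J \<open>finite T\<close> by (auto simp: T'_def)
  have support: "{t. t < m \<and> x ! t \<noteq> 0} \<subseteq> T'" using T(2) agree by (force simp: T'_def)
  have card: "card T' \<le> Suc k + card (c' ` T')"
    using card_merge_colours[OF \<open>finite T\<close> J(1,2) col0] T(4) \<open>card J = 2\<close>
    by (simp add: T'_def c'_def)
  have others: "n dvd (\<Sum>t \<in> {t \<in> T'. c' t = col}. x ! t)" if "col \<noteq> col0" for col
  proof -
    consider "{t \<in> T'. c' t = col} = {}"
      | "{t \<in> T'. c' t = col} = {t \<in> T. c t = col}" "{t \<in> T. c t = col} \<inter> J = {}"
      using fibre_merge_colours[OF \<open>col \<noteq> col0\<close>, of T J c] unfolding T'_def c'_def by blast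
    then show ?thesis
    proof cases
      case 1
      then show ?thesis by (simp only: sum.empty dvd_0_right)
    next
      case 2
      have "(\<Sum>t \<in> {t \<in> T. c t = col}. x ! t) = (\<Sum>t \<in> {t \<in> T. c t = col}. y ! t)"
        using 2(2) agree T(1) by (intro sum.cong) auto
      then show ?thesis using 2(1) T(3) by simp
    qed
  qed
  have "(\<Sum>t<m. x ! t) = (\<Sum>t \<in> T'. x ! t)"
    using support T'(1) by (intro sum.mono_neutral_right) auto
  then have "n dvd (\<Sum>t \<in> T'. x ! t)" using x by (metis csr_vertices_iff)
  then have "n dvd (\<Sum>t \<in> {t \<in> T'. c' t = col0}. x ! t)"
    by (rule dvd_fibre_sum_if_dvd_other_fibres[OF T'(2) _ others])
  then have "\<forall>col. n dvd (\<Sum>t \<in> {t \<in> T'. c' t = col}. x ! t)" using others by metis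
  then show ?thesis unfolding zero_sum_colourable_def using T'(1) support card by blast
qed

lemma zero_sum_colourable_if_walk:
  assumes "(csr_adj m n ^^ k) (replicate m 0) x"
  shows "zero_sum_colourable m n k x"
  using assms
proof (induction k arbitrary: x)
  case 0
  then show ?case unfolding zero_sum_colourable_def by (intro exI[of _ "{}"]) auto
next
  case (Suc k)
  then obtain y where "(csr_adj m n ^^ k) (replicate m 0) y" "csr_adj m n y x" by auto
  then show ?case using Suc.IH zero_sum_colourable_step by blast
qed

text \<open>The vertex \<open>(1, \<dots>, 1, -(m - 1))\<close> of \<open>\<int>\<^sub>n\<^sup>m\<close>.\<close>
definition csr_far_vertex :: "nat \<Rightarrow> nat \<Rightarrow> nat list" where
  "csr_far_vertex m n = map (\<lambda>t. if t < m - 1 then 1 else (n - (m - 1) mod n) mod n) [0..<m]"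

lemma length_csr_far_vertex [simp]: "length (csr_far_vertex m n) = m"
  by (simp add: csr_far_vertex_def)

lemma csr_far_vertex_nth:
  "t < m \<Longrightarrow> csr_far_vertex m n ! t = (if t < m - 1 then 1 else (n - (m - 1) mod n) mod n)"
  by (simp add: csr_far_vertex_def)

lemma csr_far_vertex_in_vertices:
  assumes "2 \<le> n" "0 < m"
  shows "csr_far_vertex m n \<in> csr_vertices m n"
proof -
  obtain m' where m': "m = Suc m'" using assms(2) by (cases m) auto
  have "(\<Sum>t<m. csr_far_vertex m n ! t) = m' + (n - m' mod n) mod n"
    using m' by (simp add: csr_far_vertex_nth)
  also have "[\<dots> = m' + (n - m' mod n)] (mod n)" by (simp add: cong_def mod_add_right_eq)
  also have "m' + (n - m' mod n) = m' div n * n + n"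
    using assms(1) mod_less_divisor[of n m'] div_mult_mod_eq[of m' n] by linarith
  finally have "n dvd (\<Sum>t<m. csr_far_vertex m n ! t)" by (simp add: cong_def dvd_eq_mod_eq_0)
  then show ?thesis using assms(1) by (simp add: csr_vertices_iff csr_far_vertex_nth)
qed

lemma csr_bound_le_if_zero_sum_colourable:
  assumes n: "0 < n" and m: "0 < m" and x: "zero_sum_colourable m n k (csr_far_vertex m n)"
  shows "csr_bound n m \<le> k"
proof -
  obtain T and c :: "nat \<Rightarrow> nat" where T: "T \<subseteq> {..<m}"
      "{t. t < m \<and> csr_far_vertex m n ! t \<noteq> 0} \<subseteq> T"
      "\<And>col. n dvd (\<Sum>t \<in> {t \<in> T. c t = col}. csr_far_vertex m n ! t)"
      "card T \<le> k + card (c ` T)"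
    using x unfolding zero_sum_colourable_def by blast
  define E K where "E = T \<inter> {m - 1}" and "K = c ` T - c ` E"
  have fin: "finite T" "finite E" using T(1) finite_subset by (auto simp: E_def)
  have "{..<m - 1} \<subseteq> T" using T(2) by (force simp: csr_far_vertex_nth)
  then have T_split: "T = {..<m - 1} \<union> E" using T(1) m by (auto simp: E_def)
  have card_T: "card T = m - 1 + card E"
    by (subst T_split, subst card_Un_disjoint) (auto simp: E_def)
  have fibre_K: "{t \<in> T. c t \<in> K} \<subseteq> {..<m - 1}" using T_split by (auto simp: K_def)
  \<comment> \<open>every colour class avoiding coordinate m - 1 sums to its size, a nonzero multiple of n\<close>
  have "n \<le> card {t \<in> T. c t = col}" if "col \<in> K" for col
  proof -
    have "{t \<in> T. c t = col} \<subseteq> {..<m - 1}" using fibre_K that by auto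
    then have "(\<Sum>t \<in> {t \<in> T. c t = col}. csr_far_vertex m n ! t) = card {t \<in> T. c t = col}"
      unfolding card_eq_sum by (intro sum.cong) (auto simp: csr_far_vertex_nth)
    then have "n dvd card {t \<in> T. c t = col}" using T(3)[of col] by simp
    moreover have "{t \<in> T. c t = col} \<noteq> {}" using that by (auto simp: K_def)
    then have "0 < card {t \<in> T. c t = col}" using fin(1) by (simp add: card_gt_0_iff)
    ultimately show ?thesis by (rule dvd_imp_le)
  qed
  then have "n * card K \<le> card {t \<in> T. c t \<in> K}"
    by (rule mult_card_le_card_fibres[OF fin(1)])
  also have "\<dots> \<le> m - 1" using card_mono[OF _ fibre_K] by simp
  finally have "card K \<le> (m - 1) div n"
    using n by (simp add: less_eq_div_iff_mult_less_eq mult.commute)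
  moreover have "card (c ` T) \<le> card K + card E"
  proof -
    have "card (c ` T) \<le> card (K \<union> c ` E)" using fin by (intro card_mono) (auto simp: K_def)
    also have "\<dots> \<le> card K + card (c ` E)" by (rule card_Un_le)
    also have "\<dots> \<le> card K + card E" using card_image_le[OF fin(2)] by simp
    finally show ?thesis .
  qed
  ultimately show ?thesis using T(4) card_T unfolding csr_bound_def by linarith
qed

lemma graph_diam_csr_le:
  assumes "0 < n"
  shows "graph_diam (csr_vertices m n) (csr_adj m n) \<le> enat (csr_bound n m)"
proof (rule graph_diam_le)
  fix u v assume u: "u \<in> csr_vertices m n" and v: "v \<in> csr_vertices m n"
  obtain k where "k \<le> csr_bound n (card (diff_coords m u v))" "(csr_adj m n ^^ k) u v"
    using csr_walk_le_csr_bound[OF assms u v] by blast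
  moreover have "csr_bound n (card (diff_coords m u v)) \<le> csr_bound n m"
    using card_mono[OF finite_lessThan diff_coords_subset[of m u v]]
    by (intro monoD[OF csr_bound_mono[OF assms]]) simp
  ultimately show "graph_dist (csr_adj m n) u v \<le> enat (csr_bound n m)"
    by (meson graph_dist_le_if_walk enat_ord_simps(1) order_trans)
qed

lemma csr_bound_le_graph_diam:
  assumes "0 < m" "0 < n"
  shows "enat (csr_bound n m) \<le> graph_diam (csr_vertices m n) (csr_adj m n)"
proof (cases "n = 1")
  case True
  then show ?thesis by (simp add: csr_bound_def zero_enat_def[symmetric])
next
  case False
  have "enat (csr_bound n m) \<le> graph_dist (csr_adj m n) (replicate m 0) (csr_far_vertex m n)"
    using csr_bound_le_if_zero_sum_colourable[OF assms(2,1)] zero_sum_colourable_if_walk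
    by (intro le_graph_dist_if_walks_long) blast
  also have "\<dots> \<le> graph_diam (csr_vertices m n) (csr_adj m n)"
    using False assms by (intro graph_dist_le_diam csr_far_vertex_in_vertices)
      (auto simp: csr_vertices_iff)
  finally show ?thesis .
qed

theorem theorem5:
  fixes m n :: nat
  assumes "0 < m" and "0 < n"
  shows "graph_diam (csr_vertices m n) (csr_adj m n) = enat (m - (m - 1) div n - 1)"
proof -
  have "graph_diam (csr_vertices m n) (csr_adj m n) = enat (csr_bound n m)"
    using graph_diam_csr_le[OF assms(2)] csr_bound_le_graph_diam[OF assms] by (rule antisym)
  then show ?thesis by (simp add: csr_bound_def)
qed

end
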